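(* For each prime number $p$, the following equalities hold in the ring of symmetric functions: $$\sum_{\lambda\leq(p-1,p-1,1)} m_\lambda=\sum_{i=0}^{p-2}(-1)^i\,S_{(p-1,\,p-1-i,\,1^{i+1})},$$ where the sum on the left runs over all partitions $\lambda$ of $2p-1$ with $\lambda\leq(p-1,p-1,1)$ in the dominance order, and $$\sum_{\lambda\leq(p-1,1)} m_\lambda=\sum_{i=0}^{p-2}(-1)^i\,S_{(p-1-i,\,1^{i+1})},$$ where the sum on the left runs over all partitions $\lambda$ of $p$ with $\lambda\leq(p-1,1)$ in the dominance order.
   Context: $m_\lambda$ denotes the monomial symmetric function and $S_\lambda$ the Schur function associated with a partition $\lambda$; $1^{k}$ denotes $k$ parts equal to $1$. The dominance order on partitions of the same integer is $\lambda\leq\mu$ iff $\lambda_1+\cdots+\lambda_k\leq\mu_1+\cdots+\mu_k$ for all $k$. *)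

theory Defs
  imports Main "HOL-Library.Multiset" "HOL-Computational_Algebra.Primes"
begin

text \<open>Symmetric functions are represented as formal power series in countably many
variables x_0, x_1, ...: a series is its coefficient function, sending an exponent
vector alpha :: nat => nat (coefficient of prod_k x_k^(alpha k)) to an integer.
The ring of symmetric functions embeds into this, so equality of coefficient
functions is equality in the ring of symmetric functions.\<close>

type_synonym symfun = "(nat \<Rightarrow> nat) \<Rightarrow> int"

definition is_partition :: "nat list \<Rightarrow> bool" where
  "is_partition lam \<longleftrightarrow> sorted (rev lam) \<and> 0 \<notin> set lam"

definition dominated :: "nat list \<Rightarrow> nat list \<Rightarrow> bool" where
  "dominated lam mu \<longleftrightarrow> (\<forall>k. sum_list (take k lam) \<le> sum_list (take k mu))"

definition monomial_sym :: "nat list \<Rightarrow> symfun" where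
  "monomial_sym lam = (\<lambda>alpha.
     if finite {i. alpha i \<noteq> 0} \<and> mset lam = image_mset alpha (mset_set {i. alpha i \<noteq> 0})
     then 1 else 0)"

text \<open>Cells of the Young diagram (row i, column j, 0-indexed).\<close>
definition cells :: "nat list \<Rightarrow> (nat \<times> nat) set" where
  "cells lam = {(i, j). i < length lam \<and> j < lam ! i}"

definition ssyt :: "nat list \<Rightarrow> (nat \<Rightarrow> nat) \<Rightarrow> (nat \<times> nat \<Rightarrow> nat) set" where
  "ssyt lam alpha = {T.
     (\<forall>c. c \<notin> cells lam \<longrightarrow> T c = 0) \<and>
     (\<forall>i j. (i, Suc j) \<in> cells lam \<longrightarrow> T (i, j) \<le> T (i, Suc j)) \<and>
     (\<forall>i j. (Suc i, j) \<in> cells lam \<longrightarrow> T (i, j) < T (Suc i, j)) \<and>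
     (\<forall>k. card {c \<in> cells lam. T c = k} = alpha k)}"

text \<open>Schur function S_lambda = sum over SSYT T of x^T.\<close>
definition schur :: "nat list \<Rightarrow> symfun" where
  "schur lam = (\<lambda>alpha. int (card (ssyt lam alpha)))"

end

theory Submission
  imports Defs
begin

text \<open>Both sides are compared coefficientwise, at the monomial whose exponent vector is
count A for a finite multiset A. A sum of monomial symmetric functions over all partitions
dominated by (n-1, n-1, 1), resp. (n-1, 1), has coefficient 1 there exactly when A has the right
size and no value occurs n times, since dominance by these partitions only bounds the parts by n - 1.

A semistandard tableau of hook shape (b, 1^k) is a weakly increasing row V and a strictly
increasing column W with V!0 < W!0; its column is any k-subset of the values of A other than the
minimum, so the alternating sum over the hooks is 1 unless A is constant. For the shapes
(n-1, n-k, 1^k) the condition that the first two rows are column strict is removed by a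
Lindstrom-Gessel-Viennot tail swap, which matches the violating fillings with the fillings of shape
(n-k-1, n, 1^k) without that condition. Both unconstrained families are counted by k-subsets of
value sets attached to the submultisets M of A of size n - 1: the values of A - M above its minimum,
resp. the values of M above the minimum of A - M. The alternating sum over k therefore only sees
the M for which these sets are empty: one M for each value of multiplicity n, resp. the n - 1
smallest entries of A.

The primality of p is only used through p \<ge> 2.\<close>

section \<open>Alternating sums of binomial coefficients\<close>

lemma alternating_sum_choose_from_1:
  assumes "m \<le> K"
  shows "(\<Sum>k=1..K. (-1::int)^(k-1) * int (m choose k)) = (if m = 0 then 0 else 1)"
proof -
  have "(\<Sum>k\<le>K. (-1::int)^k * int (m choose k)) = (\<Sum>k\<le>m. (-1::int)^k * int (m choose k))"
    by (rule sum.mono_neutral_right) (use assms in auto)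
  also have "\<dots> = (if m = 0 then 1 else 0)"
    using choose_alternating_sum[of m] by auto
  finally have full: "(\<Sum>k\<le>K. (-1::int)^k * int (m choose k)) = (if m = 0 then 1 else 0)" .
  have "(\<Sum>k\<le>K. (-1::int)^k * int (m choose k)) = 1 + (\<Sum>k=1..K. (-1::int)^k * int (m choose k))"
    by (simp add: atMost_atLeast0 sum.atLeast_Suc_atMost)
  moreover have "(\<Sum>k=1..K. (-1::int)^(k-1) * int (m choose k)) = - (\<Sum>k=1..K. (-1::int)^k * int (m choose k))"
    unfolding sum_negf[symmetric] by (rule sum.cong) (auto simp: power_eq_if)
  ultimately show ?thesis using full by auto
qed

lemma alternating_sum_card_subsets:
  assumes "finite B" "card B \<le> K"
  shows "(\<Sum>k=1..K. (-1::int)^(k-1) * int (card {S. S \<subseteq> B \<and> card S = k})) = (if B = {} then 0 else 1)"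
  using alternating_sum_choose_from_1[OF assms(2)] assms(1) by (simp add: n_subsets)

lemma alternating_sum_card_subsets_family:
  assumes "finite \<M>" "\<And>M. M \<in> \<M> \<Longrightarrow> finite (B M) \<and> card (B M) \<le> K"
  shows "(\<Sum>k=1..K. (-1::int)^(k-1) * int (\<Sum>M\<in>\<M>. card {S. S \<subseteq> B M \<and> card S = k}))
       = int (card \<M>) - int (card {M \<in> \<M>. B M = {}})"
proof -
  have "(\<Sum>k=1..K. (-1::int)^(k-1) * int (\<Sum>M\<in>\<M>. card {S. S \<subseteq> B M \<and> card S = k}))
      = (\<Sum>M\<in>\<M>. \<Sum>k=1..K. (-1::int)^(k-1) * int (card {S. S \<subseteq> B M \<and> card S = k}))"
    by (simp add: sum_distrib_left sum.swap[of _ _ \<M>])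
  also have "\<dots> = (\<Sum>M\<in>\<M>. 1 - (if B M = {} then 1 else 0))"
  proof (rule sum.cong[OF refl])
    fix M assume "M \<in> \<M>"
    then have "(\<Sum>k=1..K. (-1::int)^(k-1) * int (card {S. S \<subseteq> B M \<and> card S = k}))
        = (if B M = {} then 0 else 1)"
      using assms(2) by (intro alternating_sum_card_subsets) auto
    then show "(\<Sum>k=1..K. (-1::int)^(k-1) * int (card {S. S \<subseteq> B M \<and> card S = k}))
        = 1 - (if B M = {} then 1 else 0)"
      by simp
  qed
  also have "\<dots> = int (card \<M>) - int (card {M \<in> \<M>. B M = {}})"
    using assms(1) by (simp add: sum_subtractf sum.If_cases Collect_conj_eq Int_commute)
  finally show ?thesis .
qed

section \<open>Hook fillings\<close>

lemma sorted_nth_0_le: "sorted xs \<Longrightarrow> x \<in> set xs \<Longrightarrow> xs ! 0 \<le> x"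
  by (metis in_set_conv_nth le0 sorted_nth_mono)

lemma sorted_Min_eq_nth_0: "sorted xs \<Longrightarrow> xs \<noteq> [] \<Longrightarrow> Min (set xs) = xs ! 0"
  by (rule Min_eqI) (auto intro: sorted_nth_0_le)

lemma mset_set_subset_mset: "finite S \<Longrightarrow> S \<subseteq> set_mset R \<Longrightarrow> mset_set S \<subseteq># R"
  by (meson finite_set_mset mset_set_set_mset_msubset subset_imp_msubset_mset_set
      subset_mset.order_trans)

lemma mset_sorted_list_of_set: "finite S \<Longrightarrow> mset (sorted_list_of_set S) = mset_set S"
  by (metis mset_sorted_list_of_multiset sorted_list_of_mset_set)

lemma card_set_mset_le: "card (set_mset M) \<le> size M"
proof -
  have "card (set_mset M) = (\<Sum>x\<in>set_mset M. 1)" by simp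
  also have "\<dots> \<le> (\<Sum>x\<in>set_mset M. count M x)" by (rule sum_mono) auto
  also have "\<dots> = size M" by (simp add: size_multiset_overloaded_eq)
  finally show ?thesis .
qed

definition hook_fillings :: "nat multiset \<Rightarrow> nat \<Rightarrow> nat \<Rightarrow> (nat list \<times> nat list) set" where
  "hook_fillings R b k = {(V, W). length V = b \<and> length W = k \<and> sorted V \<and> sorted_wrt (<) W \<and>
      V ! 0 < W ! 0 \<and> mset V + mset W = R}"

definition nonminimal_values :: "nat multiset \<Rightarrow> nat set" where
  "nonminimal_values R = set_mset R - {Min (set_mset R)}"

lemma finite_nonminimal_values: "finite (nonminimal_values R)"
  by (simp add: nonminimal_values_def)

lemma card_nonminimal_values: "R \<noteq> {#} \<Longrightarrow> card (nonminimal_values R) < size R"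
proof -
  assume "R \<noteq> {#}"
  then have "card (nonminimal_values R) = card (set_mset R) - 1"
    by (simp add: nonminimal_values_def card_Diff_singleton)
  moreover have "card (set_mset R) \<le> size R"
    by (rule card_set_mset_le)
  moreover have "0 < card (set_mset R)" using \<open>R \<noteq> {#}\<close> by (simp add: card_gt_0_iff)
  ultimately show ?thesis by linarith
qed

lemma nonminimal_values_empty_iff:
  "R \<noteq> {#} \<Longrightarrow> nonminimal_values R = {} \<longleftrightarrow> (\<exists>x. R = replicate_mset (size R) x)"
proof
  assume "nonminimal_values R = {}"
  then have "set_mset R \<subseteq> {Min (set_mset R)}" by (auto simp: nonminimal_values_def)
  then show "\<exists>x. R = replicate_mset (size R) x" by (blast dest: set_mset_subset_singletonD)
next
  assume "R \<noteq> {#}" "\<exists>x. R = replicate_mset (size R) x"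
  then obtain x where "set_mset R = {x}"
    by (metis set_mset_replicate_mset_subset size_eq_0_iff_empty)
  then show "nonminimal_values R = {}" by (simp add: nonminimal_values_def)
qed

lemma hook_filling_column:
  assumes "(V, W) \<in> hook_fillings R b k" "0 < b"
  shows "set W \<subseteq> nonminimal_values R" "card (set W) = k"
proof -
  have h: "length V = b" "length W = k" "sorted V" "sorted_wrt (<) W" "V ! 0 < W ! 0"
    "mset V + mset W = R" using assms(1) unfolding hook_fillings_def by auto
  have R: "set_mset R = set V \<union> set W" using h(6) by (metis set_mset_mset set_mset_union)
  have "Min (set_mset R) = V ! 0"
    using R h sorted_nth_0_le[of V] sorted_nth_0_le[of W] assms(2)
    by (intro Min_eqI) (force simp: strict_sorted_iff)+
  then show "set W \<subseteq> nonminimal_values R"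
    using R h(4,5) sorted_nth_0_le[of W] by (fastforce simp: nonminimal_values_def strict_sorted_iff)
  show "card (set W) = k" using h(2,4) by (simp add: strict_sorted_iff distinct_card)
qed

lemma hook_filling_of_column:
  assumes "S \<subseteq> nonminimal_values R" "card S = k" "size R = b + k" "0 < b" "0 < k"
  shows "(sorted_list_of_multiset (R - mset_set S), sorted_list_of_set S) \<in> hook_fillings R b k"
proof -
  have fS: "finite S" using assms(1) finite_nonminimal_values by (rule finite_subset)
  have sub: "mset_set S \<subseteq># R"
    using assms(1) fS by (intro mset_set_subset_mset) (auto simp: nonminimal_values_def)
  define V where "V = sorted_list_of_multiset (R - mset_set S)"
  define W where "W = sorted_list_of_set S"
  have mV: "mset V = R - mset_set S" unfolding V_def by simp
  have lV: "length V = b"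
    using mV assms(2,3) sub by (metis add_diff_cancel_right' size_Diff_submset size_mset size_mset_set)
  have lW: "length W = k" using assms(2) by (simp add: W_def)
  let ?m = "Min (set_mset R)"
  have "R \<noteq> {#}" using assms by auto
  moreover have "?m \<notin> S" using assms(1) by (auto simp: nonminimal_values_def)
  ultimately have "?m \<in># R - mset_set S"
    by (simp add: in_diff_count count_mset_set)
  then have V0: "V ! 0 = ?m"
    using mV lV assms(4) sorted_nth_0_le[of V ?m]
    by (metis V_def in_diffD le_antisym Min_le finite_set_mset nth_mem
        set_mset_mset sorted_sorted_list_of_multiset)
  have "W ! 0 \<in> S" using lW assms(5) fS by (metis W_def nth_mem set_sorted_list_of_set)
  then have corner: "V ! 0 < W ! 0"
    using assms(1) V0 by (auto simp: nonminimal_values_def order.strict_iff_order)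
  have "(V, W) \<in> hook_fillings R b k"
    using lV lW mV sub fS corner
    by (simp add: hook_fillings_def V_def W_def mset_sorted_list_of_set)
  then show ?thesis by (simp add: V_def W_def)
qed

text \<open>A hook filling is determined by the set of entries of its column, which avoids the
minimum.\<close>

lemma card_hook_fillings:
  assumes "size R = b + k" "0 < b" "0 < k"
  shows "card (hook_fillings R b k) = card {S. S \<subseteq> nonminimal_values R \<and> card S = k}"
proof -
  let ?f = "\<lambda>(V::nat list, W::nat list). set W"
  let ?g = "\<lambda>S. (sorted_list_of_multiset (R - mset_set S), sorted_list_of_set S)"
  have "bij_betw ?f (hook_fillings R b k) {S. S \<subseteq> nonminimal_values R \<and> card S = k}"
  proof (rule bij_betw_byWitness[where f' = ?g])
    show "\<forall>x\<in>hook_fillings R b k. ?g (?f x) = x"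
    proof
      fix x assume "x \<in> hook_fillings R b k"
      then obtain V W where x: "x = (V, W)" and h: "sorted V" "sorted_wrt (<) W" "mset V + mset W = R"
        unfolding hook_fillings_def by auto
      then have "R - mset_set (set W) = mset V" by (auto simp: strict_sorted_iff mset_set_set)
      then show "?g (?f x) = x"
        using x h by (simp add: strict_sorted_iff sorted_list_of_set.idem_if_sorted_distinct sorted_sort_id)
    qed
    show "\<forall>S\<in>{S. S \<subseteq> nonminimal_values R \<and> card S = k}. ?f (?g S) = S"
      using finite_nonminimal_values by (auto dest: finite_subset)
    show "?f ` hook_fillings R b k \<subseteq> {S. S \<subseteq> nonminimal_values R \<and> card S = k}"
      using hook_filling_column assms(2) by fastforce
    show "?g ` {S. S \<subseteq> nonminimal_values R \<and> card S = k} \<subseteq> hook_fillings R b k"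
      using hook_filling_of_column assms by blast
  qed
  then show ?thesis by (rule bij_betw_same_card)
qed

section \<open>Stacked fillings\<close>

definition stacked_fillings ::
    "nat \<Rightarrow> nat \<Rightarrow> nat \<Rightarrow> nat multiset \<Rightarrow> (nat list \<times> nat list \<times> nat list) set" where
  "stacked_fillings a b k A = {(U, V, W). length U = a \<and> sorted U \<and>
      (V, W) \<in> hook_fillings (A - mset U) b k \<and> mset U \<subseteq># A}"

definition sorted_sublists :: "nat \<Rightarrow> nat multiset \<Rightarrow> nat list set" where
  "sorted_sublists a A = {U. length U = a \<and> sorted U \<and> mset U \<subseteq># A}"

definition submultisets :: "nat \<Rightarrow> nat multiset \<Rightarrow> nat multiset set" where
  "submultisets a A = {M. M \<subseteq># A \<and> size M = a}"

definition values_above_rest :: "nat multiset \<Rightarrow> nat multiset \<Rightarrow> nat set" where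
  "values_above_rest A M = {x \<in> set_mset M. Min (set_mset (A - M)) < x}"

lemma stacked_fillings_iff:
  "(U, V, W) \<in> stacked_fillings a b k A \<longleftrightarrow>
     length U = a \<and> length V = b \<and> length W = k \<and> sorted U \<and> sorted V \<and> sorted_wrt (<) W \<and>
     V ! 0 < W ! 0 \<and> mset U + mset V + mset W = A"
  by (auto simp: stacked_fillings_def hook_fillings_def subset_mset.le_iff_add add.assoc)

lemma stacked_fillings_Sigma:
  "stacked_fillings a b k A = (SIGMA U:sorted_sublists a A. hook_fillings (A - mset U) b k)"
  by (auto simp: stacked_fillings_def sorted_sublists_def)

lemma finite_sorted_sublists: "finite (sorted_sublists a A)"
  by (rule finite_subset[OF _ finite_lists_length_eq[of "set_mset A" a]])
     (auto simp: sorted_sublists_def dest: mset_subset_eqD)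

lemma finite_hook_fillings: "finite (hook_fillings R b k)"
  by (rule finite_subset[of _ "{xs. set xs \<subseteq> set_mset R \<and> length xs = b} \<times>
        {xs. set xs \<subseteq> set_mset R \<and> length xs = k}"])
     (auto simp: hook_fillings_def finite_lists_length_eq)

lemma finite_stacked_fillings: "finite (stacked_fillings a b k A)"
  by (simp add: stacked_fillings_Sigma finite_sorted_sublists finite_hook_fillings)

lemma submultisets_eq_image: "submultisets a A = mset ` sorted_sublists a A"
proof
  show "submultisets a A \<subseteq> mset ` sorted_sublists a A"
  proof
    fix M assume "M \<in> submultisets a A"
    then have "sorted_list_of_multiset M \<in> sorted_sublists a A"
      by (auto simp: submultisets_def sorted_sublists_def simp flip: size_mset)
    then show "M \<in> mset ` sorted_sublists a A" by (metis image_eqI mset_sorted_list_of_multiset)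
  qed
qed (auto simp: submultisets_def sorted_sublists_def)

lemma inj_on_mset_sorted_sublists: "inj_on mset (sorted_sublists a A)"
  unfolding inj_on_def sorted_sublists_def by (metis mem_Collect_eq properties_for_sort)

lemma finite_submultisets: "finite (submultisets a A)"
  by (simp add: submultisets_eq_image finite_sorted_sublists)

lemma card_stacked_fillings_by_top_row:
  assumes "size A = a + b + k" "0 < b" "0 < k"
  shows "card (stacked_fillings a b k A)
       = (\<Sum>M\<in>submultisets a A. card {S. S \<subseteq> nonminimal_values (A - M) \<and> card S = k})"
proof -
  have "card (stacked_fillings a b k A) = (\<Sum>U\<in>sorted_sublists a A. card (hook_fillings (A - mset U) b k))"
    unfolding stacked_fillings_Sigma
    by (rule card_SigmaI) (auto simp: finite_sorted_sublists finite_hook_fillings)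
  also have "\<dots> = (\<Sum>U\<in>sorted_sublists a A. card {S. S \<subseteq> nonminimal_values (A - mset U) \<and> card S = k})"
  proof (rule sum.cong[OF refl])
    fix U assume "U \<in> sorted_sublists a A"
    then have "size (A - mset U) = b + k"
      using assms(1) by (simp add: sorted_sublists_def size_Diff_submset)
    then show "card (hook_fillings (A - mset U) b k)
        = card {S. S \<subseteq> nonminimal_values (A - mset U) \<and> card S = k}"
      using card_hook_fillings assms(2,3) by blast
  qed
  also have "\<dots> = (\<Sum>M\<in>submultisets a A. card {S. S \<subseteq> nonminimal_values (A - M) \<and> card S = k})"
    unfolding submultisets_eq_image
    by (rule sum.reindex[symmetric, OF inj_on_mset_sorted_sublists, unfolded comp_def])
  finally show ?thesis .
qed

lemma stacked_filling_merge:
  assumes "(U, V, W) \<in> stacked_fillings a b k A" "0 < b"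
  shows "mset U + mset W \<in> submultisets (a + k) A"
    "set W \<subseteq> values_above_rest A (mset U + mset W)" "card (set W) = k"
proof -
  have h: "length U = a" "length V = b" "length W = k" "sorted V" "sorted_wrt (<) W"
    "V ! 0 < W ! 0" "mset U + mset V + mset W = A"
    using assms(1) by (auto simp: stacked_fillings_iff)
  have rest: "A - (mset U + mset W) = mset V" using h(7) by (auto simp: ac_simps)
  have "mset U + mset W \<subseteq># A" using h(7) by (metis add.commute add.left_commute mset_subset_eq_add_left)
  then show "mset U + mset W \<in> submultisets (a + k) A" using h(1,3) by (simp add: submultisets_def)
  have "Min (set_mset (A - (mset U + mset W))) = V ! 0"
    unfolding rest set_mset_mset using h(2,4) assms(2) by (intro sorted_Min_eq_nth_0) auto
  then show "set W \<subseteq> values_above_rest A (mset U + mset W)"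
    using h(5,6) sorted_nth_0_le[of W] by (fastforce simp: values_above_rest_def strict_sorted_iff)
  show "card (set W) = k" using h(3,5) by (simp add: strict_sorted_iff distinct_card)
qed

lemma stacked_filling_split:
  assumes "M \<in> submultisets (a + k) A" "S \<subseteq> values_above_rest A M" "card S = k"
    and "size A = a + b + k" "0 < b" "0 < k"
  shows "(sorted_list_of_multiset (M - mset_set S), sorted_list_of_multiset (A - M),
      sorted_list_of_set S) \<in> stacked_fillings a b k A"
proof -
  have M: "M \<subseteq># A" "size M = a + k" using assms(1) by (auto simp: submultisets_def)
  have fin: "finite S" using assms(2) by (rule finite_subset) (simp add: values_above_rest_def)
  have sub: "mset_set S \<subseteq># M"
    using assms(2) fin by (intro mset_set_subset_mset) (auto simp: values_above_rest_def)
  define U where "U = sorted_list_of_multiset (M - mset_set S)"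
  define V where "V = sorted_list_of_multiset (A - M)"
  define W where "W = sorted_list_of_set S"
  have mU: "mset U = M - mset_set S" and mV: "mset V = A - M" and mW: "mset W = mset_set S"
    using fin by (simp_all add: U_def V_def W_def mset_sorted_list_of_set)
  have lU: "length U = a"
    using mU M(2) assms(3) sub by (metis add_diff_cancel_right' size_Diff_submset size_mset size_mset_set)
  have lV: "length V = b"
    using mV M assms(4) by (metis add_diff_cancel_left' size_Diff_submset size_mset add.commute add.left_commute)
  have lW: "length W = k" using assms(3) by (simp add: W_def)
  have "V ! 0 = Min (set_mset (A - M))"
    using lV assms(5) by (metis V_def mV set_mset_mset sorted_Min_eq_nth_0 sorted_sorted_list_of_multiset
        length_greater_0_conv)
  moreover have "W ! 0 \<in> S"
    using lW assms(6) fin by (metis W_def nth_mem set_sorted_list_of_set)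
  ultimately have corner: "V ! 0 < W ! 0" using assms(2) by (auto simp: values_above_rest_def)
  have "mset U + mset V + mset W = A"
    using mU mV mW sub M(1) by (metis add.commute add.left_commute subset_mset.add_diff_inverse)
  then have "(U, V, W) \<in> stacked_fillings a b k A"
    using lU lV lW corner by (simp add: stacked_fillings_iff U_def V_def W_def)
  then show ?thesis by (simp add: U_def V_def W_def)
qed

text \<open>Here U and W are merged into one multiset M; W is recovered as a k-set of values of M
exceeding the corner V!0, which is the minimum of the rest A - M.\<close>

lemma card_stacked_fillings_by_rest:
  assumes "size A = a + b + k" "0 < b" "0 < k"
  shows "card (stacked_fillings a b k A)
       = (\<Sum>M\<in>submultisets (a + k) A. card {S. S \<subseteq> values_above_rest A M \<and> card S = k})"
proof -
  let ?f = "\<lambda>(U::nat list, V::nat list, W::nat list). (mset U + mset W, set W)"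
  let ?g = "\<lambda>(M, S). (sorted_list_of_multiset (M - mset_set S), sorted_list_of_multiset (A - M),
      sorted_list_of_set S)"
  let ?T = "SIGMA M:submultisets (a + k) A. {S. S \<subseteq> values_above_rest A M \<and> card S = k}"
  have "bij_betw ?f (stacked_fillings a b k A) ?T"
  proof (rule bij_betw_byWitness[where f' = ?g])
    show "\<forall>x\<in>stacked_fillings a b k A. ?g (?f x) = x"
    proof
      fix x assume "x \<in> stacked_fillings a b k A"
      then obtain U V W where x: "x = (U, V, W)" and h: "sorted U" "sorted V" "sorted_wrt (<) W"
        "mset U + mset V + mset W = A"
        by (metis prod_cases3 stacked_fillings_iff)
      then have "A - (mset U + mset W) = mset V" "mset U + mset W - mset_set (set W) = mset U"
        by (auto simp: strict_sorted_iff mset_set_set)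
      then show "?g (?f x) = x"
        using x h by (simp add: strict_sorted_iff sorted_list_of_set.idem_if_sorted_distinct sorted_sort_id)
    qed
    have "finite S" if "S \<subseteq> values_above_rest A M" for S M
      using that by (rule finite_subset) (simp add: values_above_rest_def)
    then show "\<forall>y\<in>?T. ?f (?g y) = y"
      by (auto simp: submultisets_def mset_sorted_list_of_set values_above_rest_def
          intro!: subset_mset.diff_add mset_set_subset_mset)
    show "?f ` stacked_fillings a b k A \<subseteq> ?T"
      using stacked_filling_merge assms(2) by fastforce
    show "?g ` ?T \<subseteq> stacked_fillings a b k A"
      using stacked_filling_split assms by fastforce
  qed
  then have "card (stacked_fillings a b k A) = card ?T" by (rule bij_betw_same_card)
  also have "\<dots> = (\<Sum>M\<in>submultisets (a + k) A. card {S. S \<subseteq> values_above_rest A M \<and> card S = k})"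
    by (rule card_SigmaI) (auto simp: finite_submultisets values_above_rest_def)
  finally show ?thesis .
qed

section \<open>The tail swap\<close>

definition column_strict :: "nat list \<Rightarrow> nat list \<Rightarrow> bool" where
  "column_strict U V \<longleftrightarrow> (\<forall>j<length V. U ! j < V ! j)"

text \<open>Exchanging the tails of two rows after a column j where column strictness first fails
keeps both rows sorted and makes j again the first such column: this is the
Lindstrom-Gessel-Viennot involution on the first two rows.\<close>

definition swap_tails :: "nat \<Rightarrow> nat list \<Rightarrow> nat list \<Rightarrow> nat list \<times> nat list" where
  "swap_tails j U V = (take j U @ drop (Suc j) V, take (Suc j) V @ drop j U)"

definition swap_point :: "nat \<Rightarrow> nat list \<Rightarrow> nat list \<Rightarrow> bool" where
  "swap_point j U V \<longleftrightarrow> j \<le> length U \<and> j < length V \<and> (\<forall>i<j. U ! i < V ! i) \<and>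
      (j < length U \<longrightarrow> V ! j \<le> U ! j)"

definition first_weak_column :: "nat list \<Rightarrow> nat list \<Rightarrow> nat" where
  "first_weak_column U V = (LEAST j. length U \<le> j \<or> V ! j \<le> U ! j)"

lemma first_weak_column_eq: "swap_point j U V \<Longrightarrow> first_weak_column U V = j"
  unfolding first_weak_column_def swap_point_def
  by (rule Least_equality) (auto simp: not_le[symmetric])

lemma swap_point_first_weak_column:
  assumes "length U < length V \<or> \<not> column_strict U V"
  shows "swap_point (first_weak_column U V) U V"
proof -
  let ?P = "\<lambda>j. length U \<le> j \<or> V ! j \<le> U ! j"
  obtain j0 where j0: "j0 < length V" "?P j0"
    using assms by (auto simp: column_strict_def not_less)
  have "?P (first_weak_column U V)"
    using j0(2) unfolding first_weak_column_def by (rule LeastI)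
  moreover have "first_weak_column U V \<le> j0"
    using j0(2) unfolding first_weak_column_def by (rule Least_le)
  moreover have "first_weak_column U V \<le> length U"
    unfolding first_weak_column_def by (rule Least_le) simp
  moreover have "\<forall>i<first_weak_column U V. U ! i < V ! i"
    unfolding first_weak_column_def using not_less_Least by fastforce
  ultimately show ?thesis using j0(1) by (auto simp: swap_point_def)
qed

lemma swap_point_not_column_strict:
  "swap_point j U V \<Longrightarrow> j < length U \<Longrightarrow> \<not> column_strict U V"
  by (auto simp: swap_point_def column_strict_def)

lemma nth_swap_tails:
  assumes "swap_point j U V"
  shows "\<And>i. i < j \<Longrightarrow> fst (swap_tails j U V) ! i = U ! i"
    "\<And>i. j \<le> i \<Longrightarrow> i < length V - 1 \<Longrightarrow> fst (swap_tails j U V) ! i = V ! Suc i"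
    "\<And>i. i \<le> j \<Longrightarrow> snd (swap_tails j U V) ! i = V ! i"
    "\<And>i. j < i \<Longrightarrow> i \<le> length U \<Longrightarrow> snd (swap_tails j U V) ! i = U ! (i - 1)"
  using assms by (auto simp: swap_tails_def swap_point_def nth_append min_absorb2 Suc_leI)

lemma swap_tails_sorted:
  assumes H: "swap_point j U V" and "sorted U" "sorted V"
  shows "sorted (fst (swap_tails j U V))" "sorted (snd (swap_tails j U V))"
proof -
  have j: "j \<le> length U" "j < length V" using H by (auto simp: swap_point_def)
  have lt: "U ! i < V ! i" if "i < j" for i using H that by (auto simp: swap_point_def)
  have le: "V ! j \<le> U ! j" if "j < length U" using H that by (auto simp: swap_point_def)
  note N = nth_swap_tails[OF H]
  have U: "U ! i \<le> U ! m" if "i \<le> m" "m < length U" for i m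
    using assms(2) that by (simp add: sorted_iff_nth_mono)
  have V: "V ! i \<le> V ! m" if "i \<le> m" "m < length V" for i m
    using assms(3) that by (simp add: sorted_iff_nth_mono)
  show "sorted (fst (swap_tails j U V))"
    unfolding sorted_iff_nth_mono
  proof (intro allI impI)
    fix i m assume im: "i \<le> m" "m < length (fst (swap_tails j U V))"
    then have m: "m < length V - 1" using j by (simp add: swap_tails_def)
    consider "m < j" | "i < j" "j \<le> m" | "j \<le> i" by linarith
    then show "fst (swap_tails j U V) ! i \<le> fst (swap_tails j U V) ! m"
    proof cases
      case 1 then show ?thesis using N(1) U im j by simp
    next
      case 2 then show ?thesis using N(1,2) lt[of i] V[of i "Suc m"] m by fastforce
    next
      case 3 then show ?thesis using N(2) V im m by simp
    qed
  qed
  show "sorted (snd (swap_tails j U V))"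
    unfolding sorted_iff_nth_mono
  proof (intro allI impI)
    fix i m assume im: "i \<le> m" "m < length (snd (swap_tails j U V))"
    then have m: "m \<le> length U" using j by (simp add: swap_tails_def)
    consider "m \<le> j" | "i \<le> j" "j < m" | "j < i" by linarith
    then show "snd (swap_tails j U V) ! i \<le> snd (swap_tails j U V) ! m"
    proof cases
      case 1 then show ?thesis using N(3) V im j by simp
    next
      case 2 then show ?thesis using N(3,4) le V[of i j] U[of j "m - 1"] m j by fastforce
    next
      case 3 then show ?thesis using N(4) U im m by simp
    qed
  qed
qed

lemma swap_tails_swap_point:
  assumes H: "swap_point j U V" and "sorted V"
  shows "swap_point j (fst (swap_tails j U V)) (snd (swap_tails j U V))"
proof -
  have j: "j \<le> length U" "j < length V" using H by (auto simp: swap_point_def)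
  note N = nth_swap_tails[OF H]
  have "snd (swap_tails j U V) ! j \<le> fst (swap_tails j U V) ! j"
    if "j < length (fst (swap_tails j U V))"
    using that j N(2,3) assms(2) by (simp add: swap_tails_def sorted_iff_nth_mono)
  then show ?thesis using H j N(1,3) by (auto simp: swap_point_def swap_tails_def)
qed

lemma swap_tails_swap_tails:
  "swap_point j U V \<Longrightarrow> swap_tails j (fst (swap_tails j U V)) (snd (swap_tails j U V)) = (U, V)"
  by (simp add: swap_tails_def swap_point_def min_def)

lemma mset_swap_tails:
  "mset (fst (swap_tails j U V)) + mset (snd (swap_tails j U V)) = mset U + mset V"
proof -
  have "mset U = mset (take j U) + mset (drop j U)" "mset V = mset (take (Suc j) V) + mset (drop (Suc j) V)"
    by (metis append_take_drop_id mset_append)+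
  then show ?thesis by (simp add: swap_tails_def ac_simps)
qed

definition swap_rows :: "nat list \<times> nat list \<times> nat list \<Rightarrow> nat list \<times> nat list \<times> nat list" where
  "swap_rows = (\<lambda>(U, V, W). let j = first_weak_column U V
      in (fst (swap_tails j U V), snd (swap_tails j U V), W))"

lemma swap_rows_stacked_fillings:
  assumes x: "(U, V, W) \<in> stacked_fillings a b k A"
    and H: "swap_point (first_weak_column U V) U V"
  shows "swap_rows (U, V, W) \<in> stacked_fillings (b - 1) (a + 1) k A"
    "swap_rows (swap_rows (U, V, W)) = (U, V, W)"
proof -
  let ?j = "first_weak_column U V"
  let ?U = "fst (swap_tails ?j U V)" and ?V = "snd (swap_tails ?j U V)"
  have h: "length U = a" "length V = b" "sorted U" "sorted V" "mset U + mset V + mset W = A"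
    using x by (auto simp: stacked_fillings_iff)
  have j: "?j \<le> length U" "?j < length V" using H by (auto simp: swap_point_def)
  have "length ?U = b - 1" "length ?V = a + 1" "sorted ?U" "sorted ?V"
    "mset ?U + mset ?V + mset W = A" "?V ! 0 = V ! 0"
    using swap_tails_sorted[OF H h(3,4)] mset_swap_tails[of ?j U V] nth_swap_tails(3)[OF H, of 0] h j
    by (auto simp: swap_tails_def)
  then show "swap_rows (U, V, W) \<in> stacked_fillings (b - 1) (a + 1) k A"
    using x by (simp add: swap_rows_def Let_def stacked_fillings_iff)
  have "first_weak_column ?U ?V = ?j"
    using swap_tails_swap_point[OF H h(4)] by (rule first_weak_column_eq)
  then show "swap_rows (swap_rows (U, V, W)) = (U, V, W)"
    using swap_tails_swap_tails[OF H] by (simp add: swap_rows_def Let_def)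
qed

lemma swap_point_stacked_filling:
  "(U, V, W) \<in> stacked_fillings c d k A \<Longrightarrow> c < d \<Longrightarrow> swap_point (first_weak_column U V) U V"
  by (intro swap_point_first_weak_column) (auto simp: stacked_fillings_iff)

lemma swap_rows_not_column_strict:
  assumes x: "(U, V, W) \<in> stacked_fillings c d k A" and "c + 1 < d"
  shows "swap_rows (U, V, W) \<in> {(U', V', W'). \<not> column_strict U' V'}"
proof -
  let ?j = "first_weak_column U V"
  have H: "swap_point ?j U V" using assms(2) by (intro swap_point_stacked_filling[OF x]) simp
  have l: "length U = c" "length V = d" "sorted V" using x by (auto simp: stacked_fillings_iff)
  have "swap_point ?j (fst (swap_tails ?j U V)) (snd (swap_tails ?j U V))"
    using H l(3) by (rule swap_tails_swap_point)
  moreover have "?j < length (fst (swap_tails ?j U V))"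
    using H l(1,2) assms(2) by (auto simp: swap_point_def swap_tails_def)
  ultimately have "\<not> column_strict (fst (swap_tails ?j U V)) (snd (swap_tails ?j U V))"
    by (rule swap_point_not_column_strict)
  then show ?thesis by (simp add: swap_rows_def Let_def)
qed

lemma card_not_column_strict:
  assumes "b \<le> a" "0 < b"
  shows "card {(U, V, W) \<in> stacked_fillings a b k A. \<not> column_strict U V}
       = card (stacked_fillings (b - 1) (a + 1) k A)"
proof -
  have "bij_betw swap_rows {(U, V, W) \<in> stacked_fillings a b k A. \<not> column_strict U V}
      (stacked_fillings (b - 1) (a + 1) k A)"
  proof (rule bij_betw_byWitness[where f' = swap_rows])
    show "\<forall>x\<in>{(U, V, W) \<in> stacked_fillings a b k A. \<not> column_strict U V}. swap_rows (swap_rows x) = x"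
      using swap_rows_stacked_fillings(2) swap_point_first_weak_column by blast
    show "swap_rows ` {(U, V, W) \<in> stacked_fillings a b k A. \<not> column_strict U V}
        \<subseteq> stacked_fillings (b - 1) (a + 1) k A"
      using swap_rows_stacked_fillings(1) swap_point_first_weak_column by blast
    have H: "swap_point (first_weak_column U V) U V"
      if "(U, V, W) \<in> stacked_fillings (b - 1) (a + 1) k A" for U V W
      using assms by (intro swap_point_stacked_filling[OF that]) simp
    then show "\<forall>y\<in>stacked_fillings (b - 1) (a + 1) k A. swap_rows (swap_rows y) = y"
      using swap_rows_stacked_fillings(2) by fast
    show "swap_rows ` stacked_fillings (b - 1) (a + 1) k A
        \<subseteq> {(U, V, W) \<in> stacked_fillings a b k A. \<not> column_strict U V}"
    proof
      fix y assume "y \<in> swap_rows ` stacked_fillings (b - 1) (a + 1) k A"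
      then obtain U V W where y: "y = swap_rows (U, V, W)"
        and x: "(U, V, W) \<in> stacked_fillings (b - 1) (a + 1) k A"
        by auto
      have "y \<in> stacked_fillings (a + 1 - 1) (b - 1 + 1) k A"
        unfolding y by (rule swap_rows_stacked_fillings(1)[OF x H[OF x]])
      moreover have "y \<in> {(U', V', W'). \<not> column_strict U' V'}"
        unfolding y using assms by (intro swap_rows_not_column_strict[OF x]) simp
      ultimately show "y \<in> {(U, V, W) \<in> stacked_fillings a b k A. \<not> column_strict U V}"
        using assms by auto
    qed
  qed
  then show ?thesis by (rule bij_betw_same_card)
qed

section \<open>The alternating sums over the fillings\<close>

lemma eq_replicate_mset_iff_count:
  fixes A :: "'a multiset"
  shows "size A = n \<Longrightarrow> A = replicate_mset n x \<longleftrightarrow> n \<le> count A x"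
proof
  assume "size A = n" "n \<le> count A x"
  then have "replicate_mset n x \<subseteq># A" "size (A - replicate_mset n x) = 0"
    by (simp_all add: count_le_replicate_mset_subset_eq size_Diff_submset)
  then show "A = replicate_mset n x"
    by (metis size_eq_0_iff_empty subset_mset.add_diff_inverse add_0_right)
qed simp

lemma card_high_multiplicity:
  assumes "size A < 2 * n"
  shows "card {x. n \<le> count A x} = (if \<forall>x. count A x < n then 0 else 1)"
proof (cases "\<forall>x. count A x < n")
  case False
  then obtain x where x: "n \<le> count A x" by (auto simp: not_less)
  have "y = x" if "n \<le> count A y" for y
  proof (rule ccontr)
    assume "y \<noteq> x"
    then have "count (replicate_mset n x + replicate_mset n y) z \<le> count A z" for z
      using x that by auto
    then have "size (replicate_mset n x + replicate_mset n y) \<le> size A"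
      by (intro size_mset_mono) (simp add: subseteq_mset_def)
    then show False using assms by simp
  qed
  with x have "{x. n \<le> count A x} = {x}" by blast
  with False show ?thesis by simp
qed (simp add: not_le[symmetric])

lemma submultisets_nonminimal_values_empty:
  assumes "a < size A"
  shows "{M \<in> submultisets a A. nonminimal_values (A - M) = {}}
       = (\<lambda>x. A - replicate_mset (size A - a) x) ` {x. size A - a \<le> count A x}"
proof
  let ?m = "size A - a"
  let ?h = "\<lambda>x. A - replicate_mset ?m x"
  show "{M \<in> submultisets a A. nonminimal_values (A - M) = {}} \<subseteq> ?h ` {x. ?m \<le> count A x}"
  proof clarify
    fix M assume M: "M \<in> submultisets a A" "nonminimal_values (A - M) = {}"
    have "size (A - M) = ?m" using M(1) by (simp add: submultisets_def size_Diff_submset)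
    moreover from this have "A - M \<noteq> {#}" using assms by auto
    ultimately obtain x where x: "A - M = replicate_mset ?m x"
      using M(2) nonminimal_values_empty_iff by metis
    have "M = A - (A - M)"
      using M(1) by (simp add: submultisets_def subset_mset.diff_diff_right)
    with x have "M = A - replicate_mset ?m x" by simp
    moreover have "?m \<le> count A x"
    proof -
      have "?m = count (A - M) x" using x by simp
      also have "\<dots> \<le> count A x" by simp
      finally show ?thesis .
    qed
    ultimately show "M \<in> ?h ` {x. ?m \<le> count A x}" by auto
  qed
  show "?h ` {x. ?m \<le> count A x} \<subseteq> {M \<in> submultisets a A. nonminimal_values (A - M) = {}}"
  proof
    fix M assume "M \<in> ?h ` {x. ?m \<le> count A x}"
    then obtain x where M: "M = A - replicate_mset ?m x" and x: "?m \<le> count A x" by auto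
    then have "size M = a" using assms
      by (simp add: size_Diff_submset count_le_replicate_mset_subset_eq)
    moreover have "A - M = replicate_mset ?m x"
      using x by (simp add: M count_le_replicate_mset_subset_eq subset_mset.diff_diff_right)
    ultimately show "M \<in> {M \<in> submultisets a A. nonminimal_values (A - M) = {}}"
      using assms by (auto simp: submultisets_def nonminimal_values_def M)
  qed
qed

lemma card_submultisets_nonminimal_values_empty:
  assumes "a < size A"
  shows "card {M \<in> submultisets a A. nonminimal_values (A - M) = {}}
       = card {x. size A - a \<le> count A x}"
proof -
  let ?m = "size A - a"
  have "inj_on (\<lambda>x. A - replicate_mset ?m x) {x. ?m \<le> count A x}"
  proof (rule inj_onI)
    fix x y assume x: "x \<in> {x. ?m \<le> count A x}" and y: "y \<in> {x. ?m \<le> count A x}"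
      and eq: "A - replicate_mset ?m x = A - replicate_mset ?m y"
    have "replicate_mset ?m x = A - (A - replicate_mset ?m x)"
      using x by (simp add: count_le_replicate_mset_subset_eq subset_mset.diff_diff_right)
    also have "\<dots> = replicate_mset ?m y"
      using y by (simp add: eq count_le_replicate_mset_subset_eq subset_mset.diff_diff_right)
    finally show "x = y" using assms by (simp add: replicate_mset_eq_iff)
  qed
  then show ?thesis
    by (simp add: submultisets_nonminimal_values_empty[OF assms] card_image)
qed

lemma values_above_rest_take_sorted:
  assumes "a < size A"
  shows "values_above_rest A (mset (take a (sorted_list_of_multiset A))) = {}"
proof -
  let ?xs = "sorted_list_of_multiset A"
  have "mset (take a ?xs) + mset (drop a ?xs) = A"
    by (simp flip: mset_append)
  then have rest: "A - mset (take a ?xs) = mset (drop a ?xs)" by (metis add_diff_cancel_left')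
  have "length ?xs = size A" by (metis mset_sorted_list_of_multiset size_mset)
  then have "drop a ?xs \<noteq> []" using assms by simp
  then have "Min (set (drop a ?xs)) \<in> set (drop a ?xs)" by simp
  moreover have "\<forall>x\<in>set (take a ?xs). \<forall>y\<in>set (drop a ?xs). x \<le> y"
    by (metis append_take_drop_id sorted_append sorted_sorted_list_of_multiset)
  ultimately have "\<forall>x\<in>set (take a ?xs). x \<le> Min (set (drop a ?xs))" by blast
  then show ?thesis unfolding values_above_rest_def rest by (simp add: not_less)
qed

lemma values_above_rest_empty_imp_take_sorted:
  assumes "M \<subseteq># A" "values_above_rest A M = {}"
  shows "M = mset (take (size M) (sorted_list_of_multiset A))"
proof -
  have low: "\<forall>x\<in>#M. x \<le> Min (set_mset (A - M))"
    using assms(2) by (auto simp: values_above_rest_def not_less)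
  define ys where "ys = sorted_list_of_multiset M @ sorted_list_of_multiset (A - M)"
  have "sorted ys"
    unfolding ys_def sorted_append
  proof (intro conjI ballI)
    fix x y assume "x \<in> set (sorted_list_of_multiset M)" "y \<in> set (sorted_list_of_multiset (A - M))"
    then show "x \<le> y" using low by (auto intro: order.trans)
  qed auto
  moreover have "mset ys = A" using assms(1) by (simp add: ys_def)
  ultimately have "sorted_list_of_multiset A = ys" by (metis sorted_list_of_multiset_mset sorted_sort_id)
  moreover have "length (sorted_list_of_multiset M) = size M"
    by (metis mset_sorted_list_of_multiset size_mset)
  ultimately show ?thesis by (simp add: ys_def)
qed

lemma card_submultisets_values_above_rest_empty:
  assumes "a < size A"
  shows "card {M \<in> submultisets a A. values_above_rest A M = {}} = 1"
proof -
  let ?xs = "sorted_list_of_multiset A"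
  let ?M0 = "mset (take a ?xs)"
  have "?M0 + mset (drop a ?xs) = A" by (simp flip: mset_append)
  then have "?M0 \<subseteq># A" by (metis mset_subset_eq_add_left)
  moreover have "length ?xs = size A" by (metis mset_sorted_list_of_multiset size_mset)
  ultimately have M0: "?M0 \<in> {M \<in> submultisets a A. values_above_rest A M = {}}"
    using values_above_rest_take_sorted[OF assms] assms by (simp add: submultisets_def)
  have "M = ?M0" if "M \<in> {M \<in> submultisets a A. values_above_rest A M = {}}" for M
    using values_above_rest_empty_imp_take_sorted[of M A] that by (simp add: submultisets_def)
  with M0 have "{M \<in> submultisets a A. values_above_rest A M = {}} = {?M0}" by blast
  then show ?thesis by simp
qed

definition strict_stacked_fillings ::
    "nat \<Rightarrow> nat \<Rightarrow> nat \<Rightarrow> nat multiset \<Rightarrow> (nat list \<times> nat list \<times> nat list) set" where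
  "strict_stacked_fillings a b k A = {(U, V, W) \<in> stacked_fillings a b k A. column_strict U V}"

lemma card_strict_stacked_fillings:
  assumes "b \<le> a" "0 < b"
  shows "card (strict_stacked_fillings a b k A) + card (stacked_fillings (b - 1) (a + 1) k A)
       = card (stacked_fillings a b k A)"
proof -
  let ?S = "strict_stacked_fillings a b k A"
  let ?N = "{(U, V, W) \<in> stacked_fillings a b k A. \<not> column_strict U V}"
  have fin: "finite ?S" "finite ?N"
    using finite_stacked_fillings[of a b k A]
    by (auto simp: strict_stacked_fillings_def intro: finite_subset)
  have "card (stacked_fillings a b k A) = card (?S \<union> ?N)"
    by (rule arg_cong[where f = card]) (auto simp: strict_stacked_fillings_def)
  also have "\<dots> = card ?S + card ?N"
    using fin by (rule card_Un_disjoint) (auto simp: strict_stacked_fillings_def)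
  finally show ?thesis using card_not_column_strict[OF assms, of k A] by simp
qed

lemma alternating_sum_hook_fillings:
  assumes "size A = n" "2 \<le> n"
  shows "(\<Sum>k=1..n-1. (-1::int)^(k-1) * int (card (hook_fillings A (n - k) k)))
       = (if \<forall>x. count A x < n then 1 else 0)"
proof -
  have "A \<noteq> {#}" using assms by auto
  have "(\<Sum>k=1..n-1. (-1::int)^(k-1) * int (card (hook_fillings A (n - k) k)))
      = (\<Sum>k=1..n-1. (-1::int)^(k-1) * int (card {S. S \<subseteq> nonminimal_values A \<and> card S = k}))"
    using assms by (intro sum.cong refl) (subst card_hook_fillings, auto)
  also have "\<dots> = (if nonminimal_values A = {} then 0 else 1)"
    using card_nonminimal_values[OF \<open>A \<noteq> {#}\<close>] assms(1)
    by (intro alternating_sum_card_subsets finite_nonminimal_values) simp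
  also have "nonminimal_values A = {} \<longleftrightarrow> \<not> (\<forall>x. count A x < n)"
    using nonminimal_values_empty_iff[OF \<open>A \<noteq> {#}\<close>] eq_replicate_mset_iff_count[OF assms(1)]
    by (simp add: assms(1) not_less)
  finally show ?thesis by simp
qed

lemma card_strict_stacked_fillings_eq_diff:
  assumes "size A = 2 * n - 1" "0 < k" "k < n"
  shows "int (card (strict_stacked_fillings (n - 1) (n - k) k A))
       = int (\<Sum>M\<in>submultisets (n - 1) A. card {S. S \<subseteq> nonminimal_values (A - M) \<and> card S = k})
       - int (\<Sum>M\<in>submultisets (n - 1) A. card {S. S \<subseteq> values_above_rest A M \<and> card S = k})"
proof -
  have "card (strict_stacked_fillings (n - 1) (n - k) k A) + card (stacked_fillings (n - k - 1) n k A)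
      = card (stacked_fillings (n - 1) (n - k) k A)"
    using card_strict_stacked_fillings[of "n - k" "n - 1" k A] assms(2,3) by simp
  moreover have "card (stacked_fillings (n - 1) (n - k) k A)
      = (\<Sum>M\<in>submultisets (n - 1) A. card {S. S \<subseteq> nonminimal_values (A - M) \<and> card S = k})"
    using assms by (intro card_stacked_fillings_by_top_row) auto
  moreover have "card (stacked_fillings (n - k - 1) n k A)
      = (\<Sum>M\<in>submultisets (n - 1) A. card {S. S \<subseteq> values_above_rest A M \<and> card S = k})"
    using assms card_stacked_fillings_by_rest[of A "n - k - 1" n k] by simp
  ultimately show ?thesis by linarith
qed

lemma alternating_sum_strict_stacked_fillings:
  assumes "size A = 2 * n - 1" "2 \<le> n"
  shows "(\<Sum>k=1..n-1. (-1::int)^(k-1) * int (card (strict_stacked_fillings (n - 1) (n - k) k A)))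
       = (if \<forall>x. count A x < n then 1 else 0)"
proof -
  let ?\<M> = "submultisets (n - 1) A"
  let ?P = "\<lambda>k. \<Sum>M\<in>?\<M>. card {S. S \<subseteq> nonminimal_values (A - M) \<and> card S = k}"
  let ?Q = "\<lambda>k. \<Sum>M\<in>?\<M>. card {S. S \<subseteq> values_above_rest A M \<and> card S = k}"
  have P: "(\<Sum>k=1..n-1. (-1::int)^(k-1) * int (?P k))
      = int (card ?\<M>) - int (card {M \<in> ?\<M>. nonminimal_values (A - M) = {}})"
  proof (rule alternating_sum_card_subsets_family[OF finite_submultisets])
    fix M assume "M \<in> ?\<M>"
    then have "size (A - M) = n" using assms by (auto simp: submultisets_def size_Diff_submset)
    then show "finite (nonminimal_values (A - M)) \<and> card (nonminimal_values (A - M)) \<le> n - 1"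
      using card_nonminimal_values[of "A - M"] assms(2) by (fastforce simp: finite_nonminimal_values)
  qed
  have Q: "(\<Sum>k=1..n-1. (-1::int)^(k-1) * int (?Q k))
      = int (card ?\<M>) - int (card {M \<in> ?\<M>. values_above_rest A M = {}})"
  proof (rule alternating_sum_card_subsets_family[OF finite_submultisets])
    fix M assume "M \<in> ?\<M>"
    then have "card (values_above_rest A M) \<le> size M"
      using card_mono[of "set_mset M" "values_above_rest A M"] card_set_mset_le[of M]
      by (auto simp: values_above_rest_def)
    with \<open>M \<in> ?\<M>\<close> show "finite (values_above_rest A M) \<and> card (values_above_rest A M) \<le> n - 1"
      by (simp add: submultisets_def values_above_rest_def)
  qed
  have "(\<Sum>k=1..n-1. (-1::int)^(k-1) * int (card (strict_stacked_fillings (n - 1) (n - k) k A)))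
      = (\<Sum>k=1..n-1. (-1::int)^(k-1) * (int (?P k) - int (?Q k)))"
    using assms by (intro sum.cong refl arg_cong[where f = "(*) _"] card_strict_stacked_fillings_eq_diff) auto
  also have "\<dots> = (\<Sum>k=1..n-1. (-1::int)^(k-1) * int (?P k)) - (\<Sum>k=1..n-1. (-1::int)^(k-1) * int (?Q k))"
    by (simp only: right_diff_distrib sum_subtractf)
  also have "\<dots> = 1 - int (card {x. n \<le> count A x})"
    unfolding P Q
    using card_submultisets_values_above_rest_empty[of "n - 1" A]
      card_submultisets_nonminimal_values_empty[of "n - 1" A] assms
    by simp
  also have "\<dots> = (if \<forall>x. count A x < n then 1 else 0)"
    using card_high_multiplicity[of A n] assms by simp
  finally show ?thesis .
qed

section \<open>Semistandard tableaux as lists of rows\<close>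

definition row_fillings :: "nat list \<Rightarrow> nat multiset \<Rightarrow> nat list list set" where
  "row_fillings lam A = {Rs. map length Rs = lam \<and> (\<forall>R\<in>set Rs. sorted R) \<and>
      successively column_strict Rs \<and> mset (concat Rs) = A}"

definition tableau_of_rows :: "nat list list \<Rightarrow> nat \<times> nat \<Rightarrow> nat" where
  "tableau_of_rows Rs = (\<lambda>(i, j). if i < length Rs \<and> j < length (Rs ! i) then Rs ! i ! j else 0)"

definition rows_of_tableau :: "nat list \<Rightarrow> (nat \<times> nat \<Rightarrow> nat) \<Rightarrow> nat list list" where
  "rows_of_tableau lam T = map (\<lambda>i. map (\<lambda>j. T (i, j)) [0..<lam ! i]) [0..<length lam]"

lemma mem_cells_map_length: "(i, j) \<in> cells (map length Rs) \<longleftrightarrow> i < length Rs \<and> j < length (Rs ! i)"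
  by (auto simp: cells_def)

lemma card_nth_eq_count: "card {j. j < length xs \<and> xs ! j = x} = count (mset xs) x"
  by (simp add: count_mset count_list_eq_length_filter length_filter_conv_card eq_commute)

lemma card_tableau_of_rows_eq:
  "card {c \<in> cells (map length Rs). tableau_of_rows Rs c = x} = count (mset (concat Rs)) x"
proof -
  have "{c \<in> cells (map length Rs). tableau_of_rows Rs c = x}
      = (SIGMA i:{..<length Rs}. {j. j < length (Rs ! i) \<and> Rs ! i ! j = x})"
    by (auto simp: cells_def tableau_of_rows_def)
  then have "card {c \<in> cells (map length Rs). tableau_of_rows Rs c = x}
      = (\<Sum>i<length Rs. count (mset (Rs ! i)) x)"
    by (simp add: card_nth_eq_count)
  also have "\<dots> = count (mset (concat Rs)) x"
    by (induction Rs) (simp_all add: sum.lessThan_Suc_shift del: sum.lessThan_Suc)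
  finally show ?thesis .
qed

lemma is_partition_nth_Suc_le: "is_partition lam \<Longrightarrow> Suc i < length lam \<Longrightarrow> lam ! Suc i \<le> lam ! i"
  by (simp add: is_partition_def sorted_rev_nth_mono)

lemma tableau_of_rows_of_tableau:
  assumes "T \<in> ssyt lam alpha"
  shows "tableau_of_rows (rows_of_tableau lam T) = T"
proof
  fix c :: "nat \<times> nat"
  obtain i j where c: "c = (i, j)" by fastforce
  have "T (i, j) = 0" if "(i, j) \<notin> cells lam" using assms that by (simp add: ssyt_def)
  then show "tableau_of_rows (rows_of_tableau lam T) c = T c"
    by (auto simp: c tableau_of_rows_def rows_of_tableau_def cells_def)
qed

lemma tableau_of_rows_in_ssyt:
  assumes "is_partition lam" "Rs \<in> row_fillings lam A"
  shows "tableau_of_rows Rs \<in> ssyt lam (count A)"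
proof -
  let ?T = "tableau_of_rows Rs"
  have lam: "lam = map length Rs" and sorted: "\<And>R. R \<in> set Rs \<Longrightarrow> sorted R"
    and strict: "successively column_strict Rs" and content: "mset (concat Rs) = A"
    using assms(2) by (auto simp: row_fillings_def)
  have "?T c = 0" if "c \<notin> cells lam" for c
    using that by (auto simp: lam tableau_of_rows_def cells_def split: prod.splits)
  moreover have "?T (i, j) \<le> ?T (i, Suc j)" if "(i, Suc j) \<in> cells lam" for i j
    using that sorted[of "Rs ! i"] by (auto simp: lam mem_cells_map_length tableau_of_rows_def sorted_iff_nth_Suc)
  moreover have "?T (i, j) < ?T (Suc i, j)" if "(Suc i, j) \<in> cells lam" for i j
  proof -
    have i: "Suc i < length Rs" "j < length (Rs ! Suc i)" using that by (auto simp: lam mem_cells_map_length)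
    then have "j < length (Rs ! i)"
      using is_partition_nth_Suc_le[OF assms(1), of i] by (simp add: lam)
    then show ?thesis
      using successively_nth[OF strict i(1)] i by (simp add: tableau_of_rows_def column_strict_def)
  qed
  moreover have "card {c \<in> cells lam. ?T c = x} = count A x" for x
    using card_tableau_of_rows_eq[of Rs x] by (simp add: lam content)
  ultimately show ?thesis by (simp add: ssyt_def)
qed

lemma rows_of_tableau_in_row_fillings:
  assumes "is_partition lam" "T \<in> ssyt lam (count A)"
  shows "rows_of_tableau lam T \<in> row_fillings lam A"
proof -
  let ?Rs = "rows_of_tableau lam T"
  have lam: "map length ?Rs = lam" by (simp add: rows_of_tableau_def comp_def map_nth)
  have "\<forall>R\<in>set ?Rs. sorted R"
    using assms(2) by (auto simp: rows_of_tableau_def ssyt_def sorted_iff_nth_Suc cells_def)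
  moreover have "successively column_strict ?Rs"
    unfolding successively_conv_nth column_strict_def
  proof (intro allI impI)
    fix i j assume "Suc i < length ?Rs" "j < length (?Rs ! Suc i)"
    moreover from this have "j < lam ! i"
      using is_partition_nth_Suc_le[OF assms(1), of i] by (simp add: rows_of_tableau_def)
    ultimately show "?Rs ! i ! j < ?Rs ! Suc i ! j"
      using assms(2) by (simp add: rows_of_tableau_def ssyt_def cells_def)
  qed
  moreover have "mset (concat ?Rs) = A"
  proof (rule multiset_eqI)
    fix x
    have "count (mset (concat ?Rs)) x = card {c \<in> cells lam. T c = x}"
      using card_tableau_of_rows_eq[of ?Rs x] tableau_of_rows_of_tableau[OF assms(2)] by (simp add: lam)
    then show "count (mset (concat ?Rs)) x = count A x" using assms(2) by (simp add: ssyt_def)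
  qed
  ultimately show ?thesis using lam by (simp add: row_fillings_def)
qed

lemma bij_betw_tableau_of_rows:
  assumes "is_partition lam"
  shows "bij_betw tableau_of_rows (row_fillings lam A) (ssyt lam (count A))"
proof (rule bij_betw_byWitness[where f' = "rows_of_tableau lam"])
  show "\<forall>Rs\<in>row_fillings lam A. rows_of_tableau lam (tableau_of_rows Rs) = Rs"
    by (auto simp: row_fillings_def rows_of_tableau_def tableau_of_rows_def intro!: nth_equalityI)
  show "\<forall>T\<in>ssyt lam (count A). tableau_of_rows (rows_of_tableau lam T) = T"
    using tableau_of_rows_of_tableau by blast
  show "tableau_of_rows ` row_fillings lam A \<subseteq> ssyt lam (count A)"
    using tableau_of_rows_in_ssyt[OF assms] by blast
  show "rows_of_tableau lam ` ssyt lam (count A) \<subseteq> row_fillings lam A"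
    using rows_of_tableau_in_row_fillings[OF assms] by blast
qed

lemma schur_count: "is_partition lam \<Longrightarrow> schur lam (count A) = int (card (row_fillings lam A))"
  by (simp add: schur_def bij_betw_same_card[OF bij_betw_tableau_of_rows])

lemma finite_cells: "finite (cells lam)"
proof -
  have "cells lam = (SIGMA i:{..<length lam}. {..<lam ! i})" by (auto simp: cells_def)
  then show ?thesis by simp
qed

lemma ssyt_infinite_support: "infinite {k. alpha k \<noteq> 0} \<Longrightarrow> ssyt lam alpha = {}"
proof -
  assume inf: "infinite {k. alpha k \<noteq> 0}"
  have False if T: "T \<in> ssyt lam alpha" for T
  proof -
    have "k \<in> T ` cells lam" if "alpha k \<noteq> 0" for k
    proof -
      have "card {c \<in> cells lam. T c = k} \<noteq> 0" using T that by (simp add: ssyt_def)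
      then have "{c \<in> cells lam. T c = k} \<noteq> {}" by (metis card.empty)
      then show ?thesis by auto
    qed
    then have "{k. alpha k \<noteq> 0} \<subseteq> T ` cells lam" by blast
    then show False using inf finite_cells finite_surj by blast
  qed
  then show ?thesis by blast
qed

lemma map_length_eq_replicate_1:
  "map length Ws = replicate k 1 \<Longrightarrow> Ws = map (\<lambda>w. [w]) (map hd Ws)"
proof (induction Ws arbitrary: k)
  case (Cons R Ws)
  then obtain k' where "length R = 1" "map length Ws = replicate k' 1" by (cases k) auto
  then show ?case using Cons.IH by (auto simp: length_Suc_conv)
qed simp

lemma successively_column_strict_column:
  "successively column_strict (V # map (\<lambda>w. [w]) W) \<longleftrightarrow>
     (W \<noteq> [] \<longrightarrow> V ! 0 < hd W) \<and> sorted_wrt (<) W"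
proof -
  have "successively column_strict (map (\<lambda>w. [w]) W) \<longleftrightarrow> sorted_wrt (<) W"
    by (simp add: successively_map column_strict_def successively_conv_sorted_wrt)
  then show ?thesis
    by (cases W) (simp_all add: successively_Cons column_strict_def)
qed

lemma hook_rows_in_row_fillings_iff:
  assumes "0 < k"
  shows "V # map (\<lambda>w. [w]) W \<in> row_fillings (b # replicate k 1) A \<longleftrightarrow>
    (V, W) \<in> hook_fillings A b k"
proof -
  have "map length (map (\<lambda>w. [w]) W) = replicate k 1 \<longleftrightarrow> length W = k"
    by (simp add: comp_def map_replicate_const)
  then show ?thesis
    using assms successively_column_strict_column[of V W]
    by (auto simp: row_fillings_def hook_fillings_def hd_conv_nth)
qed

lemma Cons_in_row_fillings_iff:
  "R # R' # Rs \<in> row_fillings (a # lam) A \<longleftrightarrow>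
     length R = a \<and> sorted R \<and> column_strict R R' \<and> mset R \<subseteq># A \<and>
     R' # Rs \<in> row_fillings lam (A - mset R)"
  by (auto simp: row_fillings_def subset_mset.le_iff_add)

lemma row_fillings_hook:
  assumes "0 < k"
  shows "row_fillings (b # replicate k 1) A = (\<lambda>(V, W). V # map (\<lambda>w. [w]) W) ` hook_fillings A b k"
proof
  show "row_fillings (b # replicate k 1) A \<subseteq> (\<lambda>(V, W). V # map (\<lambda>w. [w]) W) ` hook_fillings A b k"
  proof
    fix Rs assume Rs: "Rs \<in> row_fillings (b # replicate k 1) A"
    then obtain V Ws where "Rs = V # Ws" "map length Ws = replicate k 1"
      by (cases Rs) (auto simp: row_fillings_def)
    then obtain W where W: "Rs = V # map (\<lambda>w. [w]) W" using map_length_eq_replicate_1 by metis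
    then have "(V, W) \<in> hook_fillings A b k" using Rs hook_rows_in_row_fillings_iff[OF assms] by simp
    then show "Rs \<in> (\<lambda>(V, W). V # map (\<lambda>w. [w]) W) ` hook_fillings A b k"
      using W by force
  qed
  show "(\<lambda>(V, W). V # map (\<lambda>w. [w]) W) ` hook_fillings A b k \<subseteq> row_fillings (b # replicate k 1) A"
    using hook_rows_in_row_fillings_iff[OF assms] by auto
qed

lemma row_fillings_stacked:
  assumes "0 < k"
  shows "row_fillings (a # b # replicate k 1) A
       = (\<lambda>(U, V, W). U # V # map (\<lambda>w. [w]) W) ` strict_stacked_fillings a b k A"
proof -
  have iff: "U # V # map (\<lambda>w. [w]) W \<in> row_fillings (a # b # replicate k 1) A \<longleftrightarrow>
      (U, V, W) \<in> strict_stacked_fillings a b k A" for U V W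
    using hook_rows_in_row_fillings_iff[OF assms]
    by (auto simp: Cons_in_row_fillings_iff strict_stacked_fillings_def stacked_fillings_def)
  have shape: "\<exists>U V W. Rs = U # V # map (\<lambda>w. [w]) W" if "Rs \<in> row_fillings (a # b # replicate k 1) A" for Rs
  proof -
    have "map length Rs = a # b # replicate k 1" using that by (simp add: row_fillings_def)
    then obtain U V Ws where "Rs = U # V # Ws" "map length Ws = replicate k 1"
      by (auto simp: map_eq_Cons_conv)
    then show ?thesis using map_length_eq_replicate_1 by metis
  qed
  show ?thesis
  proof (intro equalityI subsetI)
    fix Rs assume Rs: "Rs \<in> row_fillings (a # b # replicate k 1) A"
    with shape obtain U V W where "Rs = U # V # map (\<lambda>w. [w]) W" by blast
    with Rs iff show "Rs \<in> (\<lambda>(U, V, W). U # V # map (\<lambda>w. [w]) W) ` strict_stacked_fillings a b k A"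
      by force
  qed (use iff in auto)
qed

lemma card_row_fillings_hook:
  assumes "0 < k"
  shows "card (row_fillings (b # replicate k 1) A) = card (hook_fillings A b k)"
  unfolding row_fillings_hook[OF assms] by (rule card_image) (auto simp: inj_on_def)

lemma card_row_fillings_stacked:
  assumes "0 < k"
  shows "card (row_fillings (a # b # replicate k 1) A) = card (strict_stacked_fillings a b k A)"
  unfolding row_fillings_stacked[OF assms] by (rule card_image) (auto simp: inj_on_def)

section \<open>The monomial side\<close>

lemma is_partition_Cons_le: "is_partition (h # t) \<Longrightarrow> x \<in> set (h # t) \<Longrightarrow> x \<le> h"
  by (auto simp: is_partition_def sorted_append)

lemma sum_list_take_le_mult:
  fixes xs :: "nat list"
  shows "(\<forall>x\<in>set xs. x \<le> c) \<Longrightarrow> sum_list (take k xs) \<le> k * c"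
proof (induction xs arbitrary: k)
  case (Cons x xs)
  then show ?case by (cases k) (auto intro: add_mono)
qed simp

lemma sum_list_take_le: "sum_list (take k (xs :: nat list)) \<le> sum_list xs"
  by (metis append_take_drop_id le_add1 sum_list_append)

lemma sum_list_take_replicate_append:
  "sum_list (take k (replicate q c @ [r])) = (if k \<le> q then k * c else q * c + (r :: nat))"
  by (auto simp: min_def sum_list_replicate not_le Suc_le_eq intro!: arg_cong[where f = sum_list])

lemma dominated_replicate_append_iff:
  assumes "is_partition lam" "sum_list lam = q * c + r" "r \<le> c"
  shows "dominated lam (replicate q c @ [r]) \<longleftrightarrow> (\<forall>x\<in>set lam. x \<le> c)"
proof
  assume dom: "dominated lam (replicate q c @ [r])"
  show "\<forall>x\<in>set lam. x \<le> c"
  proof (cases lam)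
    case (Cons h t)
    have "sum_list (take 1 lam) \<le> sum_list (take 1 (replicate q c @ [r]))"
      using dom unfolding dominated_def by blast
    also have "\<dots> \<le> c" unfolding sum_list_take_replicate_append using assms(3) by (cases q) auto
    finally have "h \<le> c" using Cons by simp
    then show ?thesis using is_partition_Cons_le assms(1) Cons by fastforce
  qed simp
next
  assume "\<forall>x\<in>set lam. x \<le> c"
  then have "sum_list (take k lam) \<le> k * c" "sum_list (take k lam) \<le> q * c + r" for k
    using sum_list_take_le_mult sum_list_take_le[of k lam] assms(2) by auto
  then show "dominated lam (replicate q c @ [r])"
    unfolding dominated_def sum_list_take_replicate_append by simp
qed

lemma finite_partitions: "finite {lam. is_partition lam \<and> sum_list lam = N}"
proof (rule finite_subset[OF _ finite_lists_length_le[of "{..N}" N]])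
  have "length lam \<le> sum_list lam" if "0 \<notin> set lam" for lam :: "nat list"
    using that by (induction lam) (auto simp: Suc_le_eq)
  then show "{lam. is_partition lam \<and> sum_list lam = N} \<subseteq> {xs. set xs \<subseteq> {..N} \<and> length xs \<le> N}"
    by (auto simp: is_partition_def member_le_sum_list)
qed simp

lemma is_partition_eqI:
  assumes "is_partition lam" "is_partition mu" "mset lam = mset mu"
  shows "lam = mu"
proof -
  have "rev lam = sort (rev mu)"
    using assms unfolding is_partition_def by (intro properties_for_sort[symmetric]) auto
  also have "\<dots> = rev mu" using assms(2) by (simp add: is_partition_def sorted_sort_id)
  finally show ?thesis by simp
qed

lemma monomial_sym_infinite_support: "infinite {i. alpha i \<noteq> 0} \<Longrightarrow> monomial_sym lam alpha = 0"
  by (simp add: monomial_sym_def)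

text \<open>At the monomial with exponent multiset A, exactly the m_lam with lam the sorted
multiplicities of A contribute.\<close>

lemma sum_monomial_sym_count:
  assumes D: "\<And>lam. is_partition lam \<Longrightarrow> sum_list lam = N \<Longrightarrow>
    D lam \<longleftrightarrow> (\<forall>x\<in>set lam. x \<le> c)"
  shows "(\<Sum>lam \<in> {lam. is_partition lam \<and> sum_list lam = N \<and> D lam}. monomial_sym lam (count A))
       = (if size A = N \<and> (\<forall>x. count A x \<le> c) then 1 else 0)"
proof -
  let ?M = "image_mset (count A) (mset_set (set_mset A))"
  define lam0 where "lam0 = rev (sorted_list_of_multiset ?M)"
  have supp: "{i. count A i \<noteq> 0} = set_mset A" by auto
  have p0: "is_partition lam0" by (auto simp: lam0_def is_partition_def simp flip: count_greater_zero_iff)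
  have s0: "sum_list lam0 = size A"
    by (simp add: lam0_def sum_mset_sum_list[symmetric] sum_unfold_sum_mset[symmetric]
        size_multiset_overloaded_eq)
  have parts0: "(\<forall>x\<in>set lam0. x \<le> c) \<longleftrightarrow> (\<forall>x. count A x \<le> c)"
    by (auto simp: lam0_def) (metis not_in_iff zero_le)
  have "monomial_sym lam (count A) = (if lam = lam0 then 1 else 0)" if "is_partition lam" for lam
  proof -
    have "mset lam0 = ?M" by (simp add: lam0_def)
    then have "mset lam = ?M \<longleftrightarrow> lam = lam0" using is_partition_eqI[OF that p0] by auto
    then show ?thesis by (simp add: monomial_sym_def supp)
  qed
  then have "(\<Sum>lam \<in> {lam. is_partition lam \<and> sum_list lam = N \<and> D lam}. monomial_sym lam (count A))
      = (\<Sum>lam \<in> {lam. is_partition lam \<and> sum_list lam = N \<and> D lam}. if lam = lam0 then 1 else 0)"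
    by (intro sum.cong) auto
  also have "\<dots> = (if lam0 \<in> {lam. is_partition lam \<and> sum_list lam = N \<and> D lam} then 1 else 0)"
    by (rule sum.delta) (rule finite_subset[OF _ finite_partitions[of N]], blast)
  also have "lam0 \<in> {lam. is_partition lam \<and> sum_list lam = N \<and> D lam}
      \<longleftrightarrow> size A = N \<and> (\<forall>x. count A x \<le> c)"
    using p0 s0 parts0 D[OF p0] by auto
  finally show ?thesis .
qed

lemma symfun_eqI:
  fixes f g :: symfun
  assumes "\<And>alpha. infinite {i. alpha i \<noteq> 0} \<Longrightarrow> f alpha = g alpha"
    and "\<And>A. f (count A) = g (count A)"
  shows "f = g"
proof
  fix alpha
  show "f alpha = g alpha"
  proof (cases "finite {i. alpha i \<noteq> 0}")
    case True
    then have "count (Abs_multiset alpha) = alpha" by simp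
    then show ?thesis using assms(2) by metis
  qed (rule assms(1))
qed

lemma schur_infinite_support: "infinite {i. alpha i \<noteq> 0} \<Longrightarrow> schur lam alpha = 0"
  by (simp add: schur_def ssyt_infinite_support)

lemma stacked_fillings_empty: "size A \<noteq> a + b + k \<Longrightarrow> stacked_fillings a b k A = {}"
  by (auto simp: stacked_fillings_iff)

lemma hook_fillings_empty: "size A \<noteq> b + k \<Longrightarrow> hook_fillings A b k = {}"
  by (auto simp: hook_fillings_def)

lemma sum_shift_from_1: "1 \<le> n \<Longrightarrow> (\<Sum>i = 0..n - 1. f (i + 1)) = (\<Sum>k = 1..n. f (k :: nat))"
  by (cases n) (simp_all add: sum.shift_bounds_cl_Suc_ivl[symmetric])

lemma schur_sum_three_rows_count:
  assumes "2 \<le> n"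
  shows "(\<Sum>i = 0..n - 2. (-1) ^ i * schur ([n - 1, n - 1 - i] @ replicate (i + 1) 1) (count A))
       = (if size A = 2 * n - 1 \<and> (\<forall>x. count A x < n) then 1 else 0)"
proof -
  have "(\<Sum>i = 0..n - 2. (-1) ^ i * schur ([n - 1, n - 1 - i] @ replicate (i + 1) 1) (count A))
      = (\<Sum>i = 0..n - 2. (-1) ^ i * int (card (strict_stacked_fillings (n - 1) (n - (i + 1)) (i + 1) A)))"
  proof (rule sum.cong[OF refl])
    fix i assume "i \<in> {0..n - 2}"
    then have "is_partition ([n - 1, n - 1 - i] @ replicate (i + 1) 1)"
      using assms by (auto simp: is_partition_def sorted_append)
    then show "(-1) ^ i * schur ([n - 1, n - 1 - i] @ replicate (i + 1) 1) (count A)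
        = (-1) ^ i * int (card (strict_stacked_fillings (n - 1) (n - (i + 1)) (i + 1) A))"
      using card_row_fillings_stacked[of "i + 1" "n - 1" "n - 1 - i" A] by (simp add: schur_count)
  qed
  also have "\<dots> = (\<Sum>k = 1..n - 1. (-1) ^ (k - 1) * int (card (strict_stacked_fillings (n - 1) (n - k) k A)))"
    using assms sum_shift_from_1[of "n - 1"
        "\<lambda>k. (-1) ^ (k - 1) * int (card (strict_stacked_fillings (n - 1) (n - k) k A))"]
    by (simp add: numeral_2_eq_2)
  also have "\<dots> = (if size A = 2 * n - 1 \<and> (\<forall>x. count A x < n) then 1 else 0)"
  proof (cases "size A = 2 * n - 1")
    case True
    then show ?thesis using alternating_sum_strict_stacked_fillings[OF True assms] by simp
  next
    case False
    then have "strict_stacked_fillings (n - 1) (n - k) k A = {}" if "k \<in> {1..n - 1}" for k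
      using that stacked_fillings_empty by (auto simp: strict_stacked_fillings_def)
    with False show ?thesis by simp
  qed
  finally show ?thesis .
qed

lemma schur_sum_hooks_count:
  assumes "2 \<le> n"
  shows "(\<Sum>i = 0..n - 2. (-1) ^ i * schur ([n - 1 - i] @ replicate (i + 1) 1) (count A))
       = (if size A = n \<and> (\<forall>x. count A x < n) then 1 else 0)"
proof -
  have "(\<Sum>i = 0..n - 2. (-1) ^ i * schur ([n - 1 - i] @ replicate (i + 1) 1) (count A))
      = (\<Sum>i = 0..n - 2. (-1) ^ i * int (card (hook_fillings A (n - (i + 1)) (i + 1))))"
  proof (rule sum.cong[OF refl])
    fix i assume "i \<in> {0..n - 2}"
    then have "is_partition ([n - 1 - i] @ replicate (i + 1) 1)"
      using assms by (auto simp: is_partition_def sorted_append)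
    then show "(-1) ^ i * schur ([n - 1 - i] @ replicate (i + 1) 1) (count A)
        = (-1) ^ i * int (card (hook_fillings A (n - (i + 1)) (i + 1)))"
      using card_row_fillings_hook[of "i + 1" "n - 1 - i" A] by (simp add: schur_count)
  qed
  also have "\<dots> = (\<Sum>k = 1..n - 1. (-1) ^ (k - 1) * int (card (hook_fillings A (n - k) k)))"
    using assms sum_shift_from_1[of "n - 1"
        "\<lambda>k. (-1) ^ (k - 1) * int (card (hook_fillings A (n - k) k))"]
    by (simp add: numeral_2_eq_2)
  also have "\<dots> = (if size A = n \<and> (\<forall>x. count A x < n) then 1 else 0)"
  proof (cases "size A = n")
    case True
    then show ?thesis using alternating_sum_hook_fillings[OF True assms] by simp
  next
    case False
    then have "hook_fillings A (n - k) k = {}" if "k \<in> {1..n - 1}" for k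
      using that hook_fillings_empty by auto
    with False show ?thesis by simp
  qed
  finally show ?thesis .
qed

lemma monomial_sum_three_rows_count:
  assumes "2 \<le> n"
  shows "(\<Sum>lam \<in> {lam. is_partition lam \<and> sum_list lam = 2 * n - 1 \<and>
              dominated lam [n - 1, n - 1, 1]}. monomial_sym lam (count A))
       = (if size A = 2 * n - 1 \<and> (\<forall>x. count A x < n) then 1 else 0)" (is "?lhs = _")
proof -
  have "dominated lam [n - 1, n - 1, 1] \<longleftrightarrow> (\<forall>x\<in>set lam. x \<le> n - 1)"
    if "is_partition lam" "sum_list lam = 2 * n - 1" for lam
    using dominated_replicate_append_iff[OF that(1), of 2 "n - 1" 1] that(2) assms
    by (simp add: numeral_2_eq_2)
  then have "?lhs = (if size A = 2 * n - 1 \<and> (\<forall>x. count A x \<le> n - 1) then 1 else 0)"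
    by (rule sum_monomial_sym_count)
  also have "\<dots> = (if size A = 2 * n - 1 \<and> (\<forall>x. count A x < n) then 1 else 0)"
    using assms by (simp add: le_diff_conv2 Suc_le_eq)
  finally show ?thesis .
qed

lemma monomial_sum_hooks_count:
  assumes "2 \<le> n"
  shows "(\<Sum>lam \<in> {lam. is_partition lam \<and> sum_list lam = n \<and>
              dominated lam [n - 1, 1]}. monomial_sym lam (count A))
       = (if size A = n \<and> (\<forall>x. count A x < n) then 1 else 0)" (is "?lhs = _")
proof -
  have "dominated lam [n - 1, 1] \<longleftrightarrow> (\<forall>x\<in>set lam. x \<le> n - 1)"
    if "is_partition lam" "sum_list lam = n" for lam
    using dominated_replicate_append_iff[OF that(1), of 1 "n - 1" 1] that(2) assms by simp
  then have "?lhs = (if size A = n \<and> (\<forall>x. count A x \<le> n - 1) then 1 else 0)"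
    by (rule sum_monomial_sym_count)
  also have "\<dots> = (if size A = n \<and> (\<forall>x. count A x < n) then 1 else 0)"
    using assms by (simp add: le_diff_conv2 Suc_le_eq)
  finally show ?thesis .
qed

lemma monomial_sum_eq_schur_sum_three_rows:
  assumes "2 \<le> n"
  shows "(\<lambda>alpha. \<Sum>lam \<in> {lam. is_partition lam \<and> sum_list lam = 2 * n - 1 \<and>
              dominated lam [n - 1, n - 1, 1]}. monomial_sym lam alpha)
       = (\<lambda>alpha. \<Sum>i = 0..n - 2. (-1) ^ i *
              schur ([n - 1, n - 1 - i] @ replicate (i + 1) 1) alpha)"
  by (rule symfun_eqI)
     (use monomial_sum_three_rows_count[OF assms] schur_sum_three_rows_count[OF assms] in
       \<open>simp_all add: monomial_sym_infinite_support schur_infinite_support\<close>)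

lemma monomial_sum_eq_schur_sum_hooks:
  assumes "2 \<le> n"
  shows "(\<lambda>alpha. \<Sum>lam \<in> {lam. is_partition lam \<and> sum_list lam = n \<and>
              dominated lam [n - 1, 1]}. monomial_sym lam alpha)
       = (\<lambda>alpha. \<Sum>i = 0..n - 2. (-1) ^ i *
              schur ([n - 1 - i] @ replicate (i + 1) 1) alpha)"
  by (rule symfun_eqI)
     (use monomial_sum_hooks_count[OF assms] schur_sum_hooks_count[OF assms] in
       \<open>simp_all add: monomial_sym_infinite_support schur_infinite_support\<close>)

theorem mainTheorem7:
  fixes p :: nat
  assumes "prime p"
  shows "((\<lambda>alpha. \<Sum>lam \<in> {lam. is_partition lam \<and> sum_list lam = 2 * p - 1 \<and>
              dominated lam [p - 1, p - 1, 1]}. monomial_sym lam alpha)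
       = (\<lambda>alpha. \<Sum>i = 0..p - 2. (-1) ^ i *
              schur ([p - 1, p - 1 - i] @ replicate (i + 1) 1) alpha))
       \<and> ((\<lambda>alpha. \<Sum>lam \<in> {lam. is_partition lam \<and> sum_list lam = p \<and>
              dominated lam [p - 1, 1]}. monomial_sym lam alpha)
       = (\<lambda>alpha. \<Sum>i = 0..p - 2. (-1) ^ i *
              schur ([p - 1 - i] @ replicate (i + 1) 1) alpha))"
  using monomial_sum_eq_schur_sum_three_rows[OF prime_ge_2_nat[OF assms]]
    monomial_sum_eq_schur_sum_hooks[OF prime_ge_2_nat[OF assms]]
  by (intro conjI)

end
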